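(* Let $H$ be a finite simple graph on vertex set $\{x_1,\dots,x_n\}$, let $\Bbbk$ be a field and $S=\Bbbk[x_1,\dots,x_n]$. Suppose $H$ has a perfect matching $M$ of cardinality $k+1$ which is $k$-admissable. Let $u_M=\prod_{e\in M}\prod_{x_i\in e}x_i$. Then the simplicial complex $K^{u_M}(I(H)^{[k]})$ is disconnected.
   Context: A perfect matching covers every vertex. $I(H)^{[k]}$ is the ideal of $S$ generated by the products $e_1\cdots e_k$ over all matchings $\{e_1,\dots,e_k\}$ of $H$ of size $k$ (edge $\{x_i,x_j\}$ identified with $x_ix_j$). For a monomial ideal $I$ and a monomial $x^\alpha$, the upper-Koszul simplicial complex $K^\alpha(I)$ on $\{x_1,\dots,x_n\}$ has as faces the subsets $W$ with $x^\alpha/\prod_{u\in W}u\in I$. A simplicial complex is connected if any two vertices are joined by a sequence of facets with consecutive facets intersecting. Two edges form a gap if they are disjoint and no edge of $H$ joins a vertex of one to a vertex of the other. A sequence $(a_1,\dots,a_n)$ of integers is $k$-admissable if $a_i\ge1$ and $\sum a_i\le n+k-1$. A matching $M$ is $k$-admissable if there are nonempty pairwise disjoint $M_1,\dots,M_r\subseteq M$ with union $M$ such that edges from different $M_i$'s always form a gap in $H$, $(|M_1|,\dots,|M_r|)$ is $k$-admissable, and the induced subgraph of $H$ on $\bigcup_{e\in M_i}e$ is a forest for each $i$. *)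

theory Defs
  imports Main "HOL-Library.Poly_Mapping"
begin

text \<open>Polynomial ring S = k[x_v : v a vertex], as finitely supported functions
  from monomials (exponent vectors 'v =>0 nat) to coefficients.\<close>

type_synonym ('v, 'k) mpoly = "('v \<Rightarrow>\<^sub>0 nat) \<Rightarrow>\<^sub>0 'k"

definition var :: "'v \<Rightarrow> ('v, 'k::comm_ring_1) mpoly" where
  "var x = Poly_Mapping.single (Poly_Mapping.single x 1) 1"

definition ideal_gen :: "'a::comm_ring_1 set \<Rightarrow> 'a set" where
  "ideal_gen G = {p. \<exists>F c. finite F \<and> F \<subseteq> G \<and> p = (\<Sum>g\<in>F. c g * g)}"

definition edge_mon :: "'v set \<Rightarrow> ('v, 'k::comm_ring_1) mpoly" where
  "edge_mon e = (\<Prod>x\<in>e. var x)"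

definition edges_mon :: "'v set set \<Rightarrow> ('v, 'k::comm_ring_1) mpoly" where
  "edges_mon N = (\<Prod>e\<in>N. edge_mon e)"

definition simple_graph :: "'v set set \<Rightarrow> bool" where
  "simple_graph E \<longleftrightarrow> (\<forall>e\<in>E. card e = 2)"

definition matching :: "'v set set \<Rightarrow> 'v set set \<Rightarrow> bool" where
  "matching E N \<longleftrightarrow> N \<subseteq> E \<and> (\<forall>e\<in>N. \<forall>f\<in>N. e \<noteq> f \<longrightarrow> e \<inter> f = {})"

definition perfect_matching :: "'v set set \<Rightarrow> 'v set set \<Rightarrow> bool" where
  "perfect_matching E N \<longleftrightarrow> matching E N \<and> \<Union>N = UNIV"

definition matching_power :: "'v set set \<Rightarrow> nat \<Rightarrow> ('v, 'k::comm_ring_1) mpoly set" where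
  "matching_power E k = ideal_gen {edges_mon N | N. matching E N \<and> card N = k}"

text \<open>Upper-Koszul simplicial complex K^m(I) for a monomial m: faces W with
  m / prod_{u in W} u in I (i.e. m = q * prod_{u in W} u for some q in I).\<close>
definition upper_koszul :: "('v, 'k::comm_ring_1) mpoly set \<Rightarrow> ('v, 'k) mpoly \<Rightarrow> 'v set set" where
  "upper_koszul I m = {W. \<exists>q\<in>I. m = q * (\<Prod>u\<in>W. var u)}"

definition facets :: "'v set set \<Rightarrow> 'v set set" where
  "facets K = {F\<in>K. \<forall>G\<in>K. F \<subseteq> G \<longrightarrow> G = F}"

definition cvertices :: "'v set set \<Rightarrow> 'v set" where
  "cvertices K = {v. {v} \<in> K}"

definition connected_complex :: "'v set set \<Rightarrow> bool" where
  "connected_complex K \<longleftrightarrow>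
    (\<forall>v\<in>cvertices K. \<forall>w\<in>cvertices K. \<exists>Fs. Fs \<noteq> [] \<and> set Fs \<subseteq> facets K \<and>
        v \<in> hd Fs \<and> w \<in> last Fs \<and>
        (\<forall>i. Suc i < length Fs \<longrightarrow> Fs ! i \<inter> Fs ! Suc i \<noteq> {}))"

definition gap :: "'v set set \<Rightarrow> 'v set \<Rightarrow> 'v set \<Rightarrow> bool" where
  "gap E e f \<longleftrightarrow> e \<inter> f = {} \<and> (\<forall>a\<in>e. \<forall>b\<in>f. {a, b} \<notin> E)"

definition induced :: "'v set set \<Rightarrow> 'v set \<Rightarrow> 'v set set" where
  "induced E U = {e\<in>E. e \<subseteq> U}"

definition has_cycle :: "'v set set \<Rightarrow> bool" where
  "has_cycle E \<longleftrightarrow> (\<exists>vs. length vs \<ge> 3 \<and> distinct vs \<and>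
      (\<forall>i<length vs. {vs ! i, vs ! ((i + 1) mod length vs)} \<in> E))"

definition forest :: "'v set set \<Rightarrow> bool" where
  "forest E \<longleftrightarrow> \<not> has_cycle E"

definition admissible_seq :: "nat \<Rightarrow> int list \<Rightarrow> bool" where
  "admissible_seq k as \<longleftrightarrow> (\<forall>a\<in>set as. a \<ge> 1) \<and> sum_list as \<le> int (length as) + int k - 1"

definition admissible_matching :: "'v set set \<Rightarrow> nat \<Rightarrow> 'v set set \<Rightarrow> bool" where
  "admissible_matching E k M \<longleftrightarrow> (\<exists>Ms :: 'v set set list.
      (\<forall>i<length Ms. Ms ! i \<noteq> {}) \<and>
      (\<forall>i<length Ms. \<forall>j<length Ms. i \<noteq> j \<longrightarrow> Ms ! i \<inter> Ms ! j = {}) \<and>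
      \<Union>(set Ms) = M \<and>
      (\<forall>i<length Ms. \<forall>j<length Ms. i \<noteq> j \<longrightarrow>
          (\<forall>e\<in>Ms ! i. \<forall>f\<in>Ms ! j. gap E e f)) \<and>
      admissible_seq k (map (\<lambda>B. int (card B)) Ms) \<and>
      (\<forall>i<length Ms. forest (induced E (\<Union>(Ms ! i)))))"

end

theory Submission
  imports Defs
begin

text \<open>Let \<open>M\<^sub>1\<close> be one block of the admissible partition of \<open>M\<close> and \<open>A\<close> the set of
  its vertices. Since \<open>card M = k + 1 > k\<close>, admissibility forces at least two blocks, so \<open>A\<close>
  is a proper nonempty vertex set, and the gap condition forbids edges between \<open>A\<close> and its
  complement. The monomial \<open>u\<^sub>M\<close> is squarefree, so a face \<open>W\<close> of the complex is disjoint
  from the vertices of some matching \<open>N\<close> with \<open>k\<close> edges. If \<open>W\<close> met both \<open>A\<close> and its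
  complement, the edges of \<open>N\<close> inside \<open>A\<close> would miss a vertex of \<open>A\<close>, hence be fewer than
  the edges of \<open>M\<close> inside \<open>A\<close>, and likewise outside \<open>A\<close>; so \<open>N\<close> would have at most
  \<open>card M - 2 = k - 1\<close> edges. Thus every face lies on one side of \<open>A\<close>, and a vertex in \<open>A\<close>
  cannot be joined to one outside by a chain of facets.\<close>

definition sqfree_exp :: "'v set \<Rightarrow> ('v \<Rightarrow>\<^sub>0 nat)" where
  "sqfree_exp S = (\<Sum>x\<in>S. Poly_Mapping.single x 1)"

lemma lookup_sqfree_exp:
  "finite S \<Longrightarrow> Poly_Mapping.lookup (sqfree_exp S) x = (if x \<in> S then 1 else 0)"
  by (induction S rule: finite_induct) (auto simp: sqfree_exp_def lookup_add lookup_single when_def)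

lemma prod_var_eq_single:
  "finite S \<Longrightarrow> (\<Prod>x\<in>S. var x) = (Poly_Mapping.single (sqfree_exp S) 1 :: ('v, 'k::comm_ring_1) mpoly)"
  by (induction S rule: finite_induct) (simp_all add: sqfree_exp_def var_def mult_single)

lemma edges_mon_eq_prod_var:
  fixes N :: "'v::finite set set"
  assumes "matching E N"
  shows "(edges_mon N :: ('v, 'k::comm_ring_1) mpoly) = (\<Prod>x\<in>\<Union>N. var x)"
  unfolding edges_mon_def edge_mon_def
  by (subst prod.Union_disjoint) (use assms in \<open>auto simp: matching_def\<close>)

lemma mult_mem_ideal_gen:
  assumes "g \<in> G"
  shows "c * g \<in> ideal_gen G"
  unfolding ideal_gen_def using assms by (intro CollectI exI[of _ "{g}"] exI[of _ "\<lambda>_. c"]) simp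

lemma monomial_multiple_mem_monomial_ideal:
  assumes "q \<in> ideal_gen ((\<lambda>\<beta>. Poly_Mapping.single \<beta> 1) ` B)"
    and "q * Poly_Mapping.single \<delta> 1 = Poly_Mapping.single \<alpha> (1::'k::comm_ring_1)"
  shows "\<exists>\<beta>\<in>B. \<exists>\<gamma>. \<alpha> = \<gamma> + (\<beta> + \<delta>)"
proof -
  from assms(1) obtain F c where F: "finite F" "F \<subseteq> (\<lambda>\<beta>. Poly_Mapping.single \<beta> 1) ` B"
    and q: "q = (\<Sum>g\<in>F. c g * g)"
    unfolding ideal_gen_def by blast
  have "(\<Sum>g\<in>F. Poly_Mapping.lookup (c g * g * Poly_Mapping.single \<delta> 1) \<alpha>) = (1::'k)"
    using arg_cong[OF assms(2), of "\<lambda>p. Poly_Mapping.lookup p \<alpha>"]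
    by (simp add: q sum_distrib_right lookup_sum)
  then have "(\<Sum>g\<in>F. Poly_Mapping.lookup (c g * g * Poly_Mapping.single \<delta> 1) \<alpha>) \<noteq> 0"
    by simp
  then obtain g where "g \<in> F" and "Poly_Mapping.lookup (c g * g * Poly_Mapping.single \<delta> 1) \<alpha> \<noteq> 0"
    by (meson sum.not_neutral_contains_not_neutral)
  moreover from \<open>g \<in> F\<close> F obtain \<beta> where "\<beta> \<in> B" "g = Poly_Mapping.single \<beta> 1" by blast
  ultimately have "\<alpha> \<in> Poly_Mapping.keys (c g * Poly_Mapping.single (\<beta> + \<delta>) 1)"
    by (simp add: in_keys_iff mult.assoc mult_single)
  with keys_mult have "\<exists>\<gamma>. \<alpha> = \<gamma> + (\<beta> + \<delta>)" by fastforce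
  with \<open>\<beta> \<in> B\<close> show ?thesis by blast
qed

lemma matching_power_eq_monomial_ideal:
  "(matching_power E k :: ('v::finite, 'k::comm_ring_1) mpoly set) =
     ideal_gen ((\<lambda>\<beta>. Poly_Mapping.single \<beta> 1) ` {sqfree_exp (\<Union>N) | N. matching E N \<and> card N = k})"
proof -
  have emon: "edges_mon N = (Poly_Mapping.single (sqfree_exp (\<Union>N)) 1 :: ('v, 'k) mpoly)"
    if "matching E N" for N
    using that by (simp add: edges_mon_eq_prod_var prod_var_eq_single)
  have "{edges_mon N :: ('v, 'k) mpoly | N. matching E N \<and> card N = k} =
        (\<lambda>\<beta>. Poly_Mapping.single \<beta> 1) ` {sqfree_exp (\<Union>N) | N. matching E N \<and> card N = k}"
    by (auto simp: emon) (metis emon)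
  then show ?thesis unfolding matching_power_def by simp
qed

lemma upper_koszul_face_avoids_matching:
  fixes E :: "'v::finite set set"
  assumes "perfect_matching E M"
    and "W \<in> upper_koszul (matching_power E k :: ('v, 'k::comm_ring_1) mpoly set) (edges_mon M)"
  obtains N where "matching E N" "card N = k" "\<Union>N \<inter> W = {}"
proof -
  from assms(2) obtain q where q: "q \<in> matching_power E k"
    and eq: "edges_mon M = q * (\<Prod>u\<in>W. var u :: ('v, 'k) mpoly)"
    unfolding upper_koszul_def by blast
  have "edges_mon M = (Poly_Mapping.single (sqfree_exp UNIV) 1 :: ('v, 'k) mpoly)"
    using assms(1) edges_mon_eq_prod_var[of E M]
    by (simp add: perfect_matching_def prod_var_eq_single)
  with eq have eqW: "q * Poly_Mapping.single (sqfree_exp W) 1 = Poly_Mapping.single (sqfree_exp UNIV) 1"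
    by (simp add: prod_var_eq_single)
  from q have "q \<in> ideal_gen ((\<lambda>\<beta>. Poly_Mapping.single \<beta> 1) `
      {sqfree_exp (\<Union>N) | N. matching E N \<and> card N = k})"
    by (simp only: matching_power_eq_monomial_ideal)
  from monomial_multiple_mem_monomial_ideal[OF this eqW] obtain \<beta> \<gamma>
    where \<beta>: "\<beta> \<in> {sqfree_exp (\<Union>N) | N. matching E N \<and> card N = k}"
      and \<gamma>: "sqfree_exp UNIV = \<gamma> + (\<beta> + sqfree_exp W)"
    by blast
  from \<beta> obtain N where N: "matching E N" "card N = k" "\<beta> = sqfree_exp (\<Union>N)" by blast
  have "\<Union>N \<inter> W = {}"
  proof (rule ccontr)
    assume "\<Union>N \<inter> W \<noteq> {}"
    then obtain x where "x \<in> \<Union>N" "x \<in> W" by blast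
    then have "Poly_Mapping.lookup (sqfree_exp UNIV) x = Poly_Mapping.lookup \<gamma> x + 2"
      by (simp add: \<gamma> N(3) lookup_add lookup_sqfree_exp)
    then show False by (simp add: lookup_sqfree_exp)
  qed
  with N that show ?thesis by blast
qed

lemma cvertices_upper_koszul_matching_power:
  fixes M :: "'v::finite set set"
  assumes "perfect_matching E M" "card M = k + 1"
  shows "v \<in> cvertices (upper_koszul (matching_power E k :: ('v, 'k::comm_ring_1) mpoly set) (edges_mon M))"
proof -
  from assms(1) obtain e where e: "e \<in> M" "v \<in> e" unfolding perfect_matching_def by blast
  define q :: "('v, 'k) mpoly" where "q = (\<Prod>x\<in>e - {v}. var x) * edges_mon (M - {e})"
  have "matching E (M - {e})" "card (M - {e}) = k"
    using assms e by (auto simp: perfect_matching_def matching_def)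
  then have "q \<in> matching_power E k"
    unfolding q_def matching_power_def by (intro mult_mem_ideal_gen) blast
  moreover have "edges_mon M = q * (\<Prod>u\<in>{v}. var u)"
  proof -
    have "edges_mon M = edge_mon e * edges_mon (M - {e})"
      unfolding edges_mon_def using e by (simp add: prod.remove)
    also have "edge_mon e = var v * (\<Prod>x\<in>e - {v}. var x)"
      unfolding edge_mon_def using e by (simp add: prod.remove)
    finally show ?thesis by (simp add: q_def ac_simps)
  qed
  ultimately show ?thesis unfolding cvertices_def upper_koszul_def by blast
qed

lemma simple_graph_edge_nonempty: "simple_graph E \<Longrightarrow> e \<in> E \<Longrightarrow> e \<noteq> {}"
  by (auto simp: simple_graph_def)

lemma matching_subset: "matching E N \<Longrightarrow> N' \<subseteq> N \<Longrightarrow> matching E N'"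
  unfolding matching_def by blast

lemma card_Union_matching:
  fixes N :: "'v::finite set set"
  assumes "simple_graph E" "matching E N"
  shows "card (\<Union>N) = 2 * card N"
proof -
  have "card (\<Union>N) = sum card N"
    using assms(2) by (intro card_Union_disjoint) (auto simp: matching_def pairwise_def disjnt_def)
  also have "\<dots> = sum (\<lambda>_. 2) N"
    using assms by (intro sum.cong) (auto simp: simple_graph_def matching_def)
  finally show ?thesis by simp
qed

lemma card_matching_less_if_missing_vertex:
  fixes N M :: "'v::finite set set"
  assumes "simple_graph E" "matching E N" "matching E M" "\<Union>N \<subseteq> \<Union>M" "a \<in> \<Union>M" "a \<notin> \<Union>N"
  shows "card N < card M"
proof -
  have "card (\<Union>N) < card (\<Union>M)"
    using assms(4-6) by (intro psubset_card_mono) auto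
  then show ?thesis using card_Union_matching assms(1-3) by (metis mult_less_cancel1)
qed

lemma Union_perfect_matching_in_block:
  assumes "perfect_matching E M" "\<forall>e\<in>E. e \<subseteq> A \<or> e \<inter> A = {}"
  shows "\<Union>{e\<in>M. e \<subseteq> A} = A"
proof (intro equalityI subsetI)
  fix x
  assume "x \<in> A"
  from assms(1) obtain e where e: "e \<in> M" "x \<in> e" "e \<in> E"
    unfolding perfect_matching_def matching_def by blast
  with assms(2) \<open>x \<in> A\<close> have "e \<subseteq> A" by blast
  with e show "x \<in> \<Union>{e\<in>M. e \<subseteq> A}" by blast
qed blast

lemma card_split_by_block:
  fixes N :: "'v::finite set set"
  assumes "simple_graph E" "N \<subseteq> E" "\<forall>e\<in>E. e \<subseteq> A \<or> e \<inter> A = {}"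
  shows "card N = card {e\<in>N. e \<subseteq> A} + card {e\<in>N. e \<subseteq> - A}"
proof -
  have "{e\<in>N. e \<subseteq> A} \<union> {e\<in>N. e \<subseteq> - A} = N"
    using assms(2,3) by blast
  then have "card N = card ({e\<in>N. e \<subseteq> A} \<union> {e\<in>N. e \<subseteq> - A})" by simp
  also have "\<dots> = card {e\<in>N. e \<subseteq> A} + card {e\<in>N. e \<subseteq> - A}"
  proof (rule card_Un_disjoint)
    show "{e\<in>N. e \<subseteq> A} \<inter> {e\<in>N. e \<subseteq> - A} = {}"
      using assms(1,2) by (auto dest: simple_graph_edge_nonempty)
  qed simp_all
  finally show ?thesis .
qed

lemma card_matching_in_block_less:
  fixes E :: "'v::finite set set"
  assumes "simple_graph E" "perfect_matching E M" "matching E N"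
    and "\<forall>e\<in>E. e \<subseteq> A \<or> e \<inter> A = {}" "a \<in> A" "a \<notin> \<Union>N"
  shows "card {e\<in>N. e \<subseteq> A} < card {e\<in>M. e \<subseteq> A}"
proof (rule card_matching_less_if_missing_vertex[OF assms(1)])
  show "matching E {e\<in>N. e \<subseteq> A}" "matching E {e\<in>M. e \<subseteq> A}"
    using assms(2,3) by (auto intro: matching_subset simp: perfect_matching_def)
  show "\<Union>{e\<in>N. e \<subseteq> A} \<subseteq> \<Union>{e\<in>M. e \<subseteq> A}" "a \<in> \<Union>{e\<in>M. e \<subseteq> A}" "a \<notin> \<Union>{e\<in>N. e \<subseteq> A}"
    using Union_perfect_matching_in_block[OF assms(2,4)] assms(5,6) by auto
qed

lemma upper_koszul_face_within_block:
  fixes E :: "'v::finite set set"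
  assumes "simple_graph E" "perfect_matching E M" "card M = k + 1"
    and split: "\<forall>e\<in>E. e \<subseteq> A \<or> e \<inter> A = {}"
    and W: "W \<in> upper_koszul (matching_power E k :: ('v, 'k::comm_ring_1) mpoly set) (edges_mon M)"
    and "W \<inter> A \<noteq> {}"
  shows "W \<subseteq> A"
proof (rule ccontr)
  assume "\<not> W \<subseteq> A"
  with \<open>W \<inter> A \<noteq> {}\<close> obtain a b where a: "a \<in> W" "a \<in> A" and b: "b \<in> W" "b \<in> - A" by blast
  obtain N where N: "matching E N" "card N = k" "\<Union>N \<inter> W = {}"
    using upper_koszul_face_avoids_matching[OF assms(2) W] .
  have split_compl: "\<forall>e\<in>E. e \<subseteq> - A \<or> e \<inter> - A = {}" using split by blast
  have "card {e\<in>N. e \<subseteq> A} < card {e\<in>M. e \<subseteq> A}"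
    using card_matching_in_block_less[OF assms(1,2) N(1) split a(2)] a(1) N(3) by blast
  moreover have "card {e\<in>N. e \<subseteq> - A} < card {e\<in>M. e \<subseteq> - A}"
    using card_matching_in_block_less[OF assms(1,2) N(1) split_compl b(2)] b(1) N(3) by blast
  moreover have "card N = card {e\<in>N. e \<subseteq> A} + card {e\<in>N. e \<subseteq> - A}"
    using card_split_by_block[OF assms(1) _ split] N(1) by (simp add: matching_def)
  moreover have "card M = card {e\<in>M. e \<subseteq> A} + card {e\<in>M. e \<subseteq> - A}"
    using card_split_by_block[OF assms(1) _ split] assms(2)
    by (simp add: perfect_matching_def matching_def)
  ultimately show False using N(2) assms(3) by linarith
qed

lemma not_connected_complex_if_separated:
  assumes sep: "\<And>W. W \<in> K \<Longrightarrow> W \<inter> A \<noteq> {} \<Longrightarrow> W \<subseteq> A"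
    and "a \<in> cvertices K" "a \<in> A" "b \<in> cvertices K" "b \<notin> A"
  shows "\<not> connected_complex K"
proof
  assume "connected_complex K"
  with assms(2,4) obtain Fs where Fs: "Fs \<noteq> []" "set Fs \<subseteq> facets K" "a \<in> hd Fs" "b \<in> last Fs"
    and chain: "\<And>i. Suc i < length Fs \<Longrightarrow> Fs ! i \<inter> Fs ! Suc i \<noteq> {}"
    unfolding connected_complex_def by meson
  have in_K: "Fs ! i \<in> K" if "i < length Fs" for i
    using Fs(2) nth_mem[OF that] by (auto simp: facets_def)
  have "Fs ! i \<subseteq> A" if "i < length Fs" for i
    using that
  proof (induction i)
    case 0
    with Fs(1,3) \<open>a \<in> A\<close> show ?case by (intro sep in_K) (auto simp: hd_conv_nth)
  next
    case (Suc i)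
    with chain[OF Suc.prems] show ?case by (intro sep in_K) auto
  qed
  then have "last Fs \<subseteq> A" using Fs(1) by (simp add: last_conv_nth)
  with Fs(4) \<open>b \<notin> A\<close> show False by blast
qed

lemma gap_block_separates_edges:
  assumes "simple_graph E" "perfect_matching E M" "M1 \<subseteq> M" "\<forall>f\<in>M1. \<forall>g\<in>M - M1. gap E f g"
    and "e \<in> E"
  shows "e \<subseteq> \<Union>M1 \<or> e \<inter> \<Union>M1 = {}"
proof (rule ccontr)
  assume "\<not> ?thesis"
  then obtain x y where x: "x \<in> e" "x \<in> \<Union>M1" and y: "y \<in> e" "y \<notin> \<Union>M1" by blast
  from assms(1,5) obtain u v where "e = {u, v}"
    unfolding simple_graph_def card_2_iff by blast
  with x y have "e = {x, y}" by auto
  from x obtain f where f: "f \<in> M1" "x \<in> f" by blast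
  from assms(2) obtain g where g: "g \<in> M" "y \<in> g" unfolding perfect_matching_def by blast
  with y have "g \<in> M - M1" by blast
  with f assms(4) have "gap E f g" by blast
  with f g \<open>e = {x, y}\<close> assms(5) show False unfolding gap_def by blast
qed

lemma Union_proper_submatching:
  assumes "simple_graph E" "perfect_matching E M" "M1 \<subseteq> M" "M1 \<noteq> {}" "M1 \<noteq> M"
  shows "\<Union>M1 \<noteq> {}" "\<Union>M1 \<noteq> UNIV"
proof -
  have M_edges: "\<forall>e\<in>M. e \<noteq> {}" and M_disj: "\<forall>e\<in>M. \<forall>f\<in>M. e \<noteq> f \<longrightarrow> e \<inter> f = {}"
    using assms(1,2) simple_graph_edge_nonempty by (auto simp: perfect_matching_def matching_def)
  from assms(4) obtain f where "f \<in> M1" by blast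
  with assms(3) M_edges show "\<Union>M1 \<noteq> {}" by blast
  from assms(3,5) have "M - M1 \<noteq> {}" by auto
  then obtain g where g: "g \<in> M" "g \<notin> M1" by blast
  with M_edges obtain b where "b \<in> g" by blast
  have "g \<inter> f = {}" if "f \<in> M1" for f
    using M_disj g assms(3) that by (metis subsetD)
  with \<open>b \<in> g\<close> show "\<Union>M1 \<noteq> UNIV" by blast
qed

lemma admissible_matching_obtains_gap_block:
  assumes "admissible_matching E k M" "k < card M"
  obtains M1 where "M1 \<subseteq> M" "M1 \<noteq> {}" "M1 \<noteq> M" "\<forall>f\<in>M1. \<forall>g\<in>M - M1. gap E f g"
proof -
  from assms(1) obtain Ms :: "'a set set list" where
    ne: "\<forall>i<length Ms. Ms ! i \<noteq> {}" and
    dj: "\<forall>i<length Ms. \<forall>j<length Ms. i \<noteq> j \<longrightarrow> Ms ! i \<inter> Ms ! j = {}" and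
    un: "\<Union>(set Ms) = M" and
    gp: "\<forall>i<length Ms. \<forall>j<length Ms. i \<noteq> j \<longrightarrow> (\<forall>e\<in>Ms ! i. \<forall>f\<in>Ms ! j. gap E e f)" and
    ad: "admissible_seq k (map (\<lambda>B. int (card B)) Ms)"
    unfolding admissible_matching_def by blast
  have "2 \<le> length Ms"
  proof (rule ccontr)
    assume "\<not> 2 \<le> length Ms"
    then have "Ms = [] \<or> (\<exists>B. Ms = [B])"
      by (cases Ms) (auto simp: Suc_le_eq)
    with un ad assms(2) show False by (auto simp: admissible_seq_def)
  qed
  then have len: "0 < length Ms" "1 < length Ms" by linarith+
  show thesis
  proof (rule that[of "Ms ! 0"])
    show "Ms ! 0 \<subseteq> M"
      using un nth_mem[OF len(1)] by blast
    show "Ms ! 0 \<noteq> {}"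
      using ne len(1) by blast
    have "Ms ! 1 \<subseteq> M" "Ms ! 1 \<noteq> {}" "Ms ! 0 \<inter> Ms ! 1 = {}"
      using un nth_mem[OF len(2)] ne dj len by (blast, blast, simp)
    then show "Ms ! 0 \<noteq> M" by blast
    show "\<forall>f\<in>Ms ! 0. \<forall>g\<in>M - Ms ! 0. gap E f g"
    proof (intro ballI)
      fix f g
      assume f: "f \<in> Ms ! 0" and g: "g \<in> M - Ms ! 0"
      then obtain j where "j < length Ms" "g \<in> Ms ! j"
        using un by (auto simp: in_set_conv_nth)
      moreover from g this(2) have "j \<noteq> 0" by (cases j) auto
      ultimately show "gap E f g" using gp len(1) f by blast
    qed
  qed
qed

theorem lemma5p9:
  fixes E :: "'v::finite set set" and M :: "'v set set" and k :: nat
  assumes "simple_graph E"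
    and "perfect_matching E M"
    and "card M = k + 1"
    and "admissible_matching E k M"
  shows "\<not> connected_complex
           (upper_koszul (matching_power E k :: ('v, 'k::field) mpoly set) (edges_mon M))"
proof -
  obtain M1 where M1: "M1 \<subseteq> M" "M1 \<noteq> {}" "M1 \<noteq> M" and gaps: "\<forall>f\<in>M1. \<forall>g\<in>M - M1. gap E f g"
    using admissible_matching_obtains_gap_block[OF assms(4)] assms(3) by auto
  define A where "A = \<Union>M1"
  have split: "\<forall>e\<in>E. e \<subseteq> A \<or> e \<inter> A = {}"
    using gap_block_separates_edges[OF assms(1,2) M1(1) gaps] by (simp add: A_def)
  obtain a b where "a \<in> A" "b \<notin> A"
    using Union_proper_submatching[OF assms(1,2) M1] unfolding A_def by blast
  show ?thesis
  proof (rule not_connected_complex_if_separated)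
    show "W \<subseteq> A" if "W \<in> upper_koszul (matching_power E k) (edges_mon M)" "W \<inter> A \<noteq> {}" for W
      by (rule upper_koszul_face_within_block[OF assms(1-3) split that])
    show "a \<in> A" "b \<notin> A" by fact+
  qed (use cvertices_upper_koszul_matching_power[OF assms(2,3)] in blast)+
qed

end
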